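(* Let $\mathcal{CT}$ be a theory of constraints, with set of atomic constraints $\mathcal C$, that is closed under negation and under existential quantification. Then for all finite sets $C,D\subseteq\mathcal C$ such that $C\cup D$ is consistent, there exist sets of constraints $E_1,\dots,E_r$ such that $\mathit{cs}(C,D)=\{E_1,\dots,E_r\}$ is a constraint split of $C$ and $D$.
   Context: $\mathcal{CT}$ is a first-order theory with equality (identity on its domain, including the Clark Equality Theory) whose atomic formulas form the set $\mathcal C$ of (atomic) constraints; $\mathcal{CT}\models\varphi$ means $\varphi$ is valid in $\mathcal{CT}$. A finite set $\{c_1,\dots,c_n\}$ of constraints (or the corresponding conjunction) is consistent if $\mathcal{CT}\models\exists(c_1\wedge\dots\wedge c_n)$; two conjunctions $e,e'$ are mutually exclusive if $\mathcal{CT}\models\neg\exists(e\wedge e')$. $\mathit{vars}(\cdot)$ is the set of variables; for a formula $B$ and set $V$ of variables, $\exists_{-V}B$ denotes $B$ existentially quantified over its free variables not in $V$; $\forall(\cdot)$, $\exists(\cdot)$ are universal and existential closures. $\mathcal{CT}$ is closed under negation if for every $c\in\mathcal C$ there exist $d_1,\dots,d_m\in\mathcal C$ with $\mathcal{CT}\models\forall(\neg c\leftrightarrow(d_1\vee\dots\vee d_m))$ and $\mathcal{CT}\models\neg\exists(d_i\wedge d_j)$ for all $i\ne j$. $\mathcal{CT}$ is closed under existential quantification if for every $\{c_1,\dots,c_m\}\subseteq\mathcal C$ and set $V$ of variables there exist constraints $d_1,\dots,d_n\in\mathcal C$ grouped as $d_1,\dots,d_i,\dots,d_j,\dots,d_n$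 such that $\mathcal{CT}\models\forall(\exists_{-V}(c_1\wedge\dots\wedge c_m)\leftrightarrow((d_1\wedge\dots\wedge d_i)\vee\dots\vee(d_j\wedge\dots\wedge d_n)))$ (i.e. a disjunction of conjunctions of constraints). Constraint split. For $C=\{c_1,\dots,c_m\}$ and $D=\{d_1,\dots,d_n\}$, a constraint split of $C$ and $D$ is a set $\mathit{cs}(C,D)=\{E_1,\dots,E_r\}$ of sets of constraints, with $e_i$ the conjunction of the constraints in $E_i$, such that: (1) $\mathcal{CT}\models\forall((\neg\exists_{-V}(c_1\wedge\dots\wedge c_m)\wedge d_1\wedge\dots\wedge d_n)\leftrightarrow(e_1\vee\dots\vee e_r))$ where $V=\mathit{vars}(C)\cap\mathit{vars}(D)$; (2) each $e_i$ is consistent; (3) $e_i$ and $e_j$ are mutually exclusive for $i\ne j$.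
   Formalization: Validity in $\mathcal{CT}$ means truth under every valuation in one fixed structure, so $\mathcal{CT}$ is taken to be a complete theory. The paper assumes this as well. *)

theory Defs
  imports Main
begin

text \<open>CT is represented by its intended
structure: I c \<sigma> says that constraint c holds under valuation \<sigma>,
vars c is the (finite) set of variables of c. Validity in CT of a formula
is truth in this structure under all valuations (i.e. CT is read as complete).\<close>

definition holds_conj :: "('c \<Rightarrow> ('v \<Rightarrow> 'd) \<Rightarrow> bool) \<Rightarrow> 'c set \<Rightarrow> ('v \<Rightarrow> 'd) \<Rightarrow> bool" where
  "holds_conj I E \<sigma> \<longleftrightarrow> (\<forall>c\<in>E. I c \<sigma>)"

definition exists_except :: "('c \<Rightarrow> ('v \<Rightarrow> 'd) \<Rightarrow> bool) \<Rightarrow> 'c set \<Rightarrow> 'v set \<Rightarrow> ('v \<Rightarrow> 'd) \<Rightarrow> bool" where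
  "exists_except I E V \<sigma> \<longleftrightarrow> (\<exists>\<tau>. (\<forall>v\<in>V. \<tau> v = \<sigma> v) \<and> holds_conj I E \<tau>)"

definition vars_set :: "('c \<Rightarrow> 'v set) \<Rightarrow> 'c set \<Rightarrow> 'v set" where
  "vars_set vars E = (\<Union>c\<in>E. vars c)"

definition consistent :: "('c \<Rightarrow> ('v \<Rightarrow> 'd) \<Rightarrow> bool) \<Rightarrow> 'c set \<Rightarrow> bool" where
  "consistent I E \<longleftrightarrow> (\<exists>\<sigma>. holds_conj I E \<sigma>)"

definition mutually_exclusive :: "('c \<Rightarrow> ('v \<Rightarrow> 'd) \<Rightarrow> bool) \<Rightarrow> 'c set \<Rightarrow> 'c set \<Rightarrow> bool" where
  "mutually_exclusive I E E' \<longleftrightarrow> \<not> (\<exists>\<sigma>. holds_conj I E \<sigma> \<and> holds_conj I E' \<sigma>)"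

definition closed_under_negation :: "('c \<Rightarrow> ('v \<Rightarrow> 'd) \<Rightarrow> bool) \<Rightarrow> bool" where
  "closed_under_negation I \<longleftrightarrow>
     (\<forall>c. \<exists>ds :: 'c list.
        (\<forall>\<sigma>. \<not> I c \<sigma> \<longleftrightarrow> (\<exists>d\<in>set ds. I d \<sigma>)) \<and>
        (\<forall>i<length ds. \<forall>j<length ds. i \<noteq> j \<longrightarrow>
            mutually_exclusive I {ds ! i} {ds ! j}))"

definition closed_under_existential :: "('c \<Rightarrow> ('v \<Rightarrow> 'd) \<Rightarrow> bool) \<Rightarrow> bool" where
  "closed_under_existential I \<longleftrightarrow>
     (\<forall>C (V :: 'v set). finite C \<longrightarrow> (\<exists>Ds :: 'c set list.
        (\<forall>D\<in>set Ds. finite D) \<and>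
        (\<forall>\<sigma>. exists_except I C V \<sigma> \<longleftrightarrow> (\<exists>D\<in>set Ds. holds_conj I D \<sigma>))))"

definition constraint_split ::
  "('c \<Rightarrow> ('v \<Rightarrow> 'd) \<Rightarrow> bool) \<Rightarrow> ('c \<Rightarrow> 'v set) \<Rightarrow> 'c set \<Rightarrow> 'c set \<Rightarrow> 'c set set \<Rightarrow> bool" where
  "constraint_split I vars C D Es \<longleftrightarrow>
     finite Es \<and> (\<forall>E\<in>Es. finite E) \<and>
     (\<forall>\<sigma>. (\<not> exists_except I C (vars_set vars C \<inter> vars_set vars D) \<sigma> \<and> holds_conj I D \<sigma>)
           \<longleftrightarrow> (\<exists>E\<in>Es. holds_conj I E \<sigma>)) \<and>
     (\<forall>E\<in>Es. consistent I E) \<and>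
     (\<forall>E\<in>Es. \<forall>E'\<in>Es. E \<noteq> E' \<longrightarrow> mutually_exclusive I E E')"

end

theory Submission
  imports Defs
begin

text \<open>By closure under existential quantification, \<open>\<exists>\<^sub>-\<^sub>V C\<close> is a finite disjunction of
finite conjunctions, so its truth value under a valuation depends only on the truth values
of the finitely many atoms \<open>P\<close> occurring in it. By closure under negation every false atom
is witnessed by exactly one true disjunct of its negation. The literal cell of a valuation
\<open>\<sigma>\<close> collects the atoms of \<open>P\<close> true at \<open>\<sigma>\<close> together with these witnesses. Any valuation
satisfying the cell of \<open>\<sigma>\<close> agrees with \<open>\<sigma>\<close> on \<open>P\<close> and has the same cell, so the distinct
sets \<open>D \<union> cell \<sigma>\<close>, for \<open>\<sigma>\<close> satisfying \<open>\<not> \<exists>\<^sub>-\<^sub>V C \<and> D\<close>, are consistent, pairwise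
exclusive, and cover that formula.\<close>

definition negates :: "('c \<Rightarrow> ('v \<Rightarrow> 'd) \<Rightarrow> bool) \<Rightarrow> 'c \<Rightarrow> 'c list \<Rightarrow> bool" where
  "negates I c ds \<longleftrightarrow>
     (\<forall>\<sigma>. \<not> I c \<sigma> \<longleftrightarrow> (\<exists>d\<in>set ds. I d \<sigma>)) \<and>
     (\<forall>i<length ds. \<forall>j<length ds. i \<noteq> j \<longrightarrow> mutually_exclusive I {ds ! i} {ds ! j})"

lemma closed_under_negation_iff: "closed_under_negation I \<longleftrightarrow> (\<forall>c. \<exists>ds. negates I c ds)"
  unfolding closed_under_negation_def negates_def ..

lemma negates_false_iff:
  assumes "negates I c ds"
  shows "\<not> I c \<sigma> \<longleftrightarrow> (\<exists>d\<in>set ds. I d \<sigma>)"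
  using assms unfolding negates_def by blast

lemma negates_unique:
  assumes "negates I c ds" "d \<in> set ds" "d' \<in> set ds" "I d \<sigma>" "I d' \<sigma>"
  shows "d = d'"
proof -
  obtain i j where "i < length ds" "j < length ds" "d = ds ! i" "d' = ds ! j"
    using assms(2,3) by (metis in_set_conv_nth)
  with assms show ?thesis
    unfolding negates_def mutually_exclusive_def holds_conj_def by blast
qed

lemma holds_conj_Un [simp]:
  "holds_conj I (A \<union> B) \<sigma> \<longleftrightarrow> holds_conj I A \<sigma> \<and> holds_conj I B \<sigma>"
  unfolding holds_conj_def by blast

definition determined_by :: "('c \<Rightarrow> ('v \<Rightarrow> 'd) \<Rightarrow> bool) \<Rightarrow> 'c set \<Rightarrow> (('v \<Rightarrow> 'd) \<Rightarrow> bool) \<Rightarrow> bool" where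
  "determined_by I P F \<longleftrightarrow> (\<forall>\<sigma> \<tau>. (\<forall>a\<in>P. I a \<sigma> \<longleftrightarrow> I a \<tau>) \<longrightarrow> F \<sigma> = F \<tau>)"

lemma determined_by_disj_conj:
  "determined_by I (\<Union>(set Ds)) (\<lambda>\<sigma>. \<exists>D\<in>set Ds. holds_conj I D \<sigma>)"
  unfolding determined_by_def holds_conj_def by blast

lemma determined_by_not: "determined_by I P F \<Longrightarrow> determined_by I P (\<lambda>\<sigma>. \<not> F \<sigma>)"
  unfolding determined_by_def by blast

lemma exists_except_determined_by_finite:
  assumes "closed_under_existential I" "finite C"
  obtains P where "finite P" "determined_by I P (exists_except I C V)"
proof -
  obtain Ds where "\<forall>D\<in>set Ds. finite D"
    and "\<forall>\<sigma>. exists_except I C V \<sigma> \<longleftrightarrow> (\<exists>D\<in>set Ds. holds_conj I D \<sigma>)"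
    using assms unfolding closed_under_existential_def by blast
  then have "exists_except I C V = (\<lambda>\<sigma>. \<exists>D\<in>set Ds. holds_conj I D \<sigma>)"
    by (simp add: fun_eq_iff)
  with \<open>\<forall>D\<in>set Ds. finite D\<close> show ?thesis
    using that determined_by_disj_conj by (metis List.finite_set finite_Union)
qed

definition literal_cell ::
  "('c \<Rightarrow> ('v \<Rightarrow> 'd) \<Rightarrow> bool) \<Rightarrow> ('c \<Rightarrow> 'c list) \<Rightarrow> 'c set \<Rightarrow> ('v \<Rightarrow> 'd) \<Rightarrow> 'c set" where
  "literal_cell I nds P \<sigma> = {a\<in>P. I a \<sigma>} \<union> {d. \<exists>a\<in>P. d \<in> set (nds a) \<and> I d \<sigma>}"

context
  fixes I :: "'c \<Rightarrow> ('v \<Rightarrow> 'd) \<Rightarrow> bool" and nds :: "'c \<Rightarrow> 'c list" and P :: "'c set"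
  assumes negates_nds: "\<And>c. negates I c (nds c)"
begin

lemma holds_literal_cell: "holds_conj I (literal_cell I nds P \<sigma>) \<sigma>"
  unfolding literal_cell_def holds_conj_def by blast

lemma literal_cell_subset: "literal_cell I nds P \<sigma> \<subseteq> P \<union> (\<Union>a\<in>P. set (nds a))"
  unfolding literal_cell_def by blast

lemma literal_cell_atoms_agree:
  assumes "holds_conj I (literal_cell I nds P \<tau>) \<sigma>" "a \<in> P"
  shows "I a \<sigma> \<longleftrightarrow> I a \<tau>"
proof (cases "I a \<tau>")
  case True
  with assms show ?thesis unfolding literal_cell_def holds_conj_def by blast
next
  case False
  then obtain d where "d \<in> set (nds a)" "I d \<tau>"
    using negates_false_iff[OF negates_nds] by blast
  with assms have "I d \<sigma>" unfolding literal_cell_def holds_conj_def by blast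
  with \<open>d \<in> set (nds a)\<close> False show ?thesis
    using negates_false_iff[OF negates_nds] by blast
qed

lemma literal_cell_eq:
  assumes holds: "holds_conj I (literal_cell I nds P \<tau>) \<sigma>"
  shows "literal_cell I nds P \<sigma> = literal_cell I nds P \<tau>"
proof -
  have "I d \<sigma> \<longleftrightarrow> I d \<tau>" if "a \<in> P" "d \<in> set (nds a)" for a d
  proof
    assume "I d \<tau>"
    with holds that show "I d \<sigma>" unfolding literal_cell_def holds_conj_def by blast
  next
    assume "I d \<sigma>"
    with that have "\<not> I a \<tau>"
      using literal_cell_atoms_agree[OF holds] negates_false_iff[OF negates_nds] by blast
    then obtain d' where d': "d' \<in> set (nds a)" "I d' \<tau>"
      using negates_false_iff[OF negates_nds] by blast
    with holds that have "I d' \<sigma>" unfolding literal_cell_def holds_conj_def by blast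
    with d' that \<open>I d \<sigma>\<close> show "I d \<tau>"
      using negates_unique[OF negates_nds] by metis
  qed
  with literal_cell_atoms_agree[OF holds] show ?thesis
    unfolding literal_cell_def by blast
qed

end

lemma exclusive_cover_if_determined_by:
  assumes "closed_under_negation I" "finite P" "finite D" "determined_by I P F"
  shows "\<exists>Es. finite Es \<and> (\<forall>E\<in>Es. finite E) \<and>
           (\<forall>\<sigma>. F \<sigma> \<and> holds_conj I D \<sigma> \<longleftrightarrow> (\<exists>E\<in>Es. holds_conj I E \<sigma>)) \<and>
           (\<forall>E\<in>Es. consistent I E) \<and>
           (\<forall>E\<in>Es. \<forall>E'\<in>Es. E \<noteq> E' \<longrightarrow> mutually_exclusive I E E')"
proof -
  obtain nds where nds: "\<And>c. negates I c (nds c)"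
    using assms(1) unfolding closed_under_negation_iff by metis
  define cell where "cell \<sigma> = D \<union> literal_cell I nds P \<sigma>" for \<sigma>
  define Es where "Es = cell ` {\<sigma>. F \<sigma> \<and> holds_conj I D \<sigma>}"
  define U where "U = D \<union> P \<union> (\<Union>a\<in>P. set (nds a))"
  have "finite U"
    using assms(2,3) by (simp add: U_def)
  have cell_U: "cell \<sigma> \<subseteq> U" for \<sigma>
    using literal_cell_subset[OF nds] by (auto simp: cell_def U_def)
  have holds_cell: "holds_conj I (cell \<sigma>) \<sigma>" if "holds_conj I D \<sigma>" for \<sigma>
    using that holds_literal_cell[OF nds] by (simp add: cell_def)
  have cell_eq: "cell \<sigma> = cell \<tau>" if "holds_conj I (cell \<tau>) \<sigma>" for \<sigma> \<tau>
    using that literal_cell_eq[OF nds, of P \<tau> \<sigma>] by (simp add: cell_def)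
  have F_eq: "F \<sigma> = F \<tau>" if "holds_conj I (cell \<tau>) \<sigma>" for \<sigma> \<tau>
  proof -
    have "\<forall>a\<in>P. I a \<sigma> \<longleftrightarrow> I a \<tau>"
      using that literal_cell_atoms_agree[OF nds, of P \<tau> \<sigma>] by (simp add: cell_def)
    with assms(4) show ?thesis unfolding determined_by_def by blast
  qed
  have "finite Es"
    using finite_subset[of Es "Pow U"] \<open>finite U\<close> cell_U by (auto simp: Es_def)
  moreover have "\<forall>E\<in>Es. finite E"
    using finite_subset[OF cell_U \<open>finite U\<close>] unfolding Es_def by blast
  moreover have "F \<sigma> \<and> holds_conj I D \<sigma> \<longleftrightarrow> (\<exists>E\<in>Es. holds_conj I E \<sigma>)" for \<sigma>
  proof
    assume "F \<sigma> \<and> holds_conj I D \<sigma>"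
    then show "\<exists>E\<in>Es. holds_conj I E \<sigma>"
      using holds_cell unfolding Es_def by blast
  next
    assume "\<exists>E\<in>Es. holds_conj I E \<sigma>"
    then obtain \<tau> where "F \<tau>" "holds_conj I (cell \<tau>) \<sigma>"
      unfolding Es_def by blast
    then show "F \<sigma> \<and> holds_conj I D \<sigma>"
      using F_eq[of \<tau> \<sigma>] by (simp add: cell_def)
  qed
  moreover have "\<forall>E\<in>Es. consistent I E"
    using holds_cell unfolding Es_def consistent_def by blast
  moreover have "\<forall>E\<in>Es. \<forall>E'\<in>Es. E \<noteq> E' \<longrightarrow> mutually_exclusive I E E'"
    using cell_eq unfolding Es_def mutually_exclusive_def by blast
  ultimately show ?thesis by blast
qed

theorem proposition7p14:
  fixes I :: "'c \<Rightarrow> ('v \<Rightarrow> 'd) \<Rightarrow> bool" and vars :: "'c \<Rightarrow> 'v set"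
  assumes infinite_vars: "infinite (UNIV :: 'v set)"
    and vars_finite: "\<And>c. finite (vars c)"
    and local: "\<And>c \<sigma> \<tau>. (\<forall>v\<in>vars c. \<sigma> v = \<tau> v) \<Longrightarrow> I c \<sigma> = I c \<tau>"
    and equality: "\<And>x y. \<exists>c. vars c = {x, y} \<and> (\<forall>\<sigma>. I c \<sigma> \<longleftrightarrow> \<sigma> x = \<sigma> y)"
    and neg: "closed_under_negation I"
    and ex: "closed_under_existential I"
    and finC: "finite C" and finD: "finite D"
    and cons: "consistent I (C \<union> D)"
  shows "\<exists>Es. constraint_split I vars C D Es"
proof -
  let ?V = "vars_set vars C \<inter> vars_set vars D"
  obtain P where "finite P" "determined_by I P (exists_except I C ?V)"
    using exists_except_determined_by_finite[OF ex finC] .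
  then show ?thesis
    using exclusive_cover_if_determined_by[OF neg _ finD determined_by_not]
    unfolding constraint_split_def by blast
qed

end
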